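(* Let $A$ be a partially ordered set and $G,H,K$ games over $A$. Then: (a) if $G\lhd H$ and $H\le K$ then $G\lhd K$; (b) if $G\le H$ and $H\lhd K$ then $G\lhd K$; (c) if $G\le H$ and $H\le K$ then $G\le K$.
   Context: Games over a poset $A$ are defined inductively: for each $a\in A$ there is an atomic game $[a]$, which has no options; and if $L$ and $R$ are non-empty sets of games, then $\{L\mid R\}$ is a composite game with left options $L$ and right options $R$. The relations $\le$ and $\lhd$ are defined by simultaneous recursion: $G\le H$ iff (1) every left option $G^L$ of $G$ satisfies $G^L\lhd H$, (2) every right option $H^R$ of $H$ satisfies $G\lhd H^R$, and (3) if $G$ or $H$ is atomic then $G\lhd H$; and $G\lhd H$ iff (1) some right option $G^R$ of $G$ satisfies $G^R\le H$, or (2) some left option $H^L$ of $H$ satisfies $G\le H^L$, or (3) $G=[a]$, $H=[b]$ are atomic and $a\le b$. *)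

theory Defs
  imports Main
begin

text \<open>A composite game {L | R} is represented by a set of
  left indices with a labelling function and a set of right indices with a labelling
  function (type 'i of indices is arbitrary); the actual option sets are the images.\<close>

datatype ('a, 'i) game =
    Atom 'a
  | Comp "'i set" "'i \<Rightarrow> ('a, 'i) game" "'i set" "'i \<Rightarrow> ('a, 'i) game"

fun lopts :: "('a, 'i) game \<Rightarrow> ('a, 'i) game set" where
  "lopts (Atom a) = {}"
| "lopts (Comp IL fL IR fR) = fL ` IL"

fun ropts :: "('a, 'i) game \<Rightarrow> ('a, 'i) game set" where
  "ropts (Atom a) = {}"
| "ropts (Comp IL fL IR fR) = fR ` IR"

fun is_atom :: "('a, 'i) game \<Rightarrow> bool" where
  "is_atom (Atom a) = True"
| "is_atom (Comp IL fL IR fR) = False"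

inductive wf_game :: "('a, 'i) game \<Rightarrow> bool" where
  "wf_game (Atom a)"
| "IL \<noteq> {} \<Longrightarrow> IR \<noteq> {} \<Longrightarrow> (\<forall>i\<in>IL. wf_game (fL i)) \<Longrightarrow> (\<forall>i\<in>IR. wf_game (fR i))
     \<Longrightarrow> wf_game (Comp IL fL IR fR)"

text \<open>The relations \<le> and \<lhd> (simultaneous recursion; since games are well-founded the
  least fixed point coincides with the recursive definition).\<close>
inductive game_le :: "('a::order, 'i) game \<Rightarrow> ('a, 'i) game \<Rightarrow> bool"
  and game_lf :: "('a::order, 'i) game \<Rightarrow> ('a, 'i) game \<Rightarrow> bool" where
  le_intro: "(\<forall>GL\<in>lopts G. game_lf GL H) \<Longrightarrow> (\<forall>HR\<in>ropts H. game_lf G HR)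
     \<Longrightarrow> (is_atom G \<or> is_atom H \<longrightarrow> game_lf G H) \<Longrightarrow> game_le G H"
| lf_right: "GR \<in> ropts G \<Longrightarrow> game_le GR H \<Longrightarrow> game_lf G H"
| lf_left: "HL \<in> lopts H \<Longrightarrow> game_le G HL \<Longrightarrow> game_lf G H"
| lf_atom: "a \<le> b \<Longrightarrow> game_lf (Atom a) (Atom b)"

end

theory Submission
  imports Defs
begin

text \<open>All three statements are proved simultaneously by well-founded induction on the
  triple (G, H, K), where a triple is smaller if one of its components is replaced by one of
  its options. For (a) and (b) one unfolds the strict hypothesis: each case reduces to one of
  (a), (b), (c) for a smaller triple, except when two of the games are atoms, where the atomic
  clause of \<le> turns the other hypothesis into a strict one and transitivity of the order on
  A closes the remaining atom case. For (c) one unfolds the conclusion: its option clauses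
  are (a) and (b) for smaller triples, and its atomic clause is (a) or (b) for the triple
  itself, which is why (a) and (b) are established first.\<close>

definition opts :: "('a, 'i) game \<Rightarrow> ('a, 'i) game set" where
  "opts G = lopts G \<union> ropts G"

definition option_rel :: "(('a, 'i) game \<times> ('a, 'i) game) set" where
  "option_rel = {(G', G). G' \<in> opts G}"

lemma wf_option_rel: "wf option_rel"
proof (rule wfUNIVI)
  fix P :: "('a, 'i) game \<Rightarrow> bool" and G
  assume step: "\<forall>G. (\<forall>G'. (G', G) \<in> option_rel \<longrightarrow> P G') \<longrightarrow> P G"
  show "P G"
  proof (induction G)
    case (Atom a)
    show ?case by (rule step[rule_format]) (simp add: option_rel_def opts_def)
  next
    case (Comp IL fL IR fR)
    show ?case by (rule step[rule_format]) (auto simp: option_rel_def opts_def intro: Comp.IH)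
  qed
qed

lemma game_le_lopt: "game_le G H \<Longrightarrow> GL \<in> lopts G \<Longrightarrow> game_lf GL H"
  by (auto elim: game_le.cases)

lemma game_le_ropt: "game_le G H \<Longrightarrow> HR \<in> ropts H \<Longrightarrow> game_lf G HR"
  by (auto elim: game_le.cases)

lemma game_le_imp_lf_if_atom: "game_le G H \<Longrightarrow> is_atom G \<or> is_atom H \<Longrightarrow> game_lf G H"
  by (auto elim: game_le.cases)

lemma game_le_Atom_Atom: "a \<le> b \<Longrightarrow> game_le (Atom a) (Atom b)"
  by (rule le_intro) (simp_all add: lf_atom)

definition game_trans :: "('a::order, 'i) game \<Rightarrow> ('a, 'i) game \<Rightarrow> ('a, 'i) game \<Rightarrow> bool" where
  "game_trans G H K \<longleftrightarrow> (game_lf G H \<and> game_le H K \<longrightarrow> game_lf G K)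
       \<and> (game_le G H \<and> game_lf H K \<longrightarrow> game_lf G K)
       \<and> (game_le G H \<and> game_le H K \<longrightarrow> game_le G K)"

lemma game_transD:
  assumes "game_trans G H K"
  shows "game_lf G H \<Longrightarrow> game_le H K \<Longrightarrow> game_lf G K"
    and "game_le G H \<Longrightarrow> game_lf H K \<Longrightarrow> game_lf G K"
    and "game_le G H \<Longrightarrow> game_le H K \<Longrightarrow> game_le G K"
  using assms unfolding game_trans_def by blast+

lemma lopt_in_opts: "G' \<in> lopts G \<Longrightarrow> G' \<in> opts G"
  by (simp add: opts_def)

lemma ropt_in_opts: "G' \<in> ropts G \<Longrightarrow> G' \<in> opts G"
  by (simp add: opts_def)

context
  fixes G H K :: "('a::order, 'i) game"
  assumes trans_opt_G: "\<And>G'. G' \<in> opts G \<Longrightarrow> game_trans G' H K"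
    and trans_opt_H: "\<And>H'. H' \<in> opts H \<Longrightarrow> game_trans G H' K"
    and trans_opt_K: "\<And>K'. K' \<in> opts K \<Longrightarrow> game_trans G H K'"
begin

lemma game_lf_le_trans_step:
  assumes GH: "game_lf G H" and HK: "game_le H K"
  shows "game_lf G K"
  using GH
proof cases
  case (lf_right GR)
  have "game_le GR K"
    using game_transD(3)[OF trans_opt_G[OF ropt_in_opts[OF lf_right(1)]] lf_right(2) HK] .
  with lf_right(1) show ?thesis by (rule game_le_game_lf.lf_right)
next
  case (lf_left HL)
  have "game_lf HL K" using HK lf_left(1) by (rule game_le_lopt)
  with lf_left(2) show ?thesis
    by (rule game_transD(2)[OF trans_opt_H[OF lopt_in_opts[OF lf_left(1)]]])
next
  case G_H_atoms: (lf_atom a b)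
  with HK have "game_lf H K" by (simp add: game_le_imp_lf_if_atom)
  then show ?thesis
  proof cases
    case (lf_right HR)
    with G_H_atoms show ?thesis by simp
  next
    case (lf_left KL)
    have "game_le G H" using G_H_atoms by (simp add: game_le_Atom_Atom)
    then have "game_le G KL"
      using lf_left(2) by (rule game_transD(3)[OF trans_opt_K[OF lopt_in_opts[OF lf_left(1)]]])
    with lf_left(1) show ?thesis by (rule game_le_game_lf.lf_left)
  next
    case (lf_atom b' c)
    with G_H_atoms have "a \<le> c" by auto
    with G_H_atoms lf_atom show ?thesis by (simp add: game_le_game_lf.lf_atom)
  qed
qed

lemma game_le_lf_trans_step:
  assumes GH: "game_le G H" and HK: "game_lf H K"
  shows "game_lf G K"
  using HK
proof cases
  case (lf_right HR)
  have "game_lf G HR" using GH lf_right(1) by (rule game_le_ropt)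
  then show ?thesis
    using lf_right(2) by (rule game_transD(1)[OF trans_opt_H[OF ropt_in_opts[OF lf_right(1)]]])
next
  case (lf_left KL)
  have "game_le G KL"
    using game_transD(3)[OF trans_opt_K[OF lopt_in_opts[OF lf_left(1)]] GH lf_left(2)] .
  with lf_left(1) show ?thesis by (rule game_le_game_lf.lf_left)
next
  case H_K_atoms: (lf_atom b c)
  with GH have "game_lf G H" by (simp add: game_le_imp_lf_if_atom)
  then show ?thesis
  proof cases
    case (lf_right GR)
    have "game_le H K" using H_K_atoms by (simp add: game_le_Atom_Atom)
    with lf_right(2) have "game_le GR K"
      by (rule game_transD(3)[OF trans_opt_G[OF ropt_in_opts[OF lf_right(1)]]])
    with lf_right(1) show ?thesis by (rule game_le_game_lf.lf_right)
  next
    case (lf_left HL)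
    with H_K_atoms show ?thesis by simp
  next
    case (lf_atom a b')
    with H_K_atoms have "a \<le> c" by auto
    with H_K_atoms lf_atom show ?thesis by (simp add: game_le_game_lf.lf_atom)
  qed
qed

lemma game_le_le_trans_step:
  assumes GH: "game_le G H" and HK: "game_le H K"
  shows "game_le G K"
proof (rule le_intro)
  show "\<forall>GL\<in>lopts G. game_lf GL K"
  proof
    fix GL assume GL: "GL \<in> lopts G"
    show "game_lf GL K"
      using game_transD(1)[OF trans_opt_G[OF lopt_in_opts[OF GL]] game_le_lopt[OF GH GL] HK] .
  qed
  show "\<forall>KR\<in>ropts K. game_lf G KR"
  proof
    fix KR assume KR: "KR \<in> ropts K"
    show "game_lf G KR"
      using game_transD(2)[OF trans_opt_K[OF ropt_in_opts[OF KR]] GH game_le_ropt[OF HK KR]] .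
  qed
  show "is_atom G \<or> is_atom K \<longrightarrow> game_lf G K"
  proof
    assume "is_atom G \<or> is_atom K"
    then show "game_lf G K"
    proof
      assume "is_atom G"
      with GH have "game_lf G H" by (simp add: game_le_imp_lf_if_atom)
      then show ?thesis using HK by (rule game_lf_le_trans_step)
    next
      assume "is_atom K"
      with HK have "game_lf H K" by (simp add: game_le_imp_lf_if_atom)
      with GH show ?thesis by (rule game_le_lf_trans_step)
    qed
  qed
qed

end

lemma game_trans: "game_trans G H K"
proof -
  have "wf (option_rel <*lex*> option_rel <*lex*> option_rel)"
    by (intro wf_lex_prod wf_option_rel)
  then show ?thesis
  proof (induction "(G, H, K)" arbitrary: G H K rule: wf_induct_rule)
    case less
    have IG: "game_trans G' H K" if "G' \<in> opts G" for G'
      using less that by (simp add: option_rel_def)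
    have IH: "game_trans G H' K" if "H' \<in> opts H" for H'
      using less that by (simp add: option_rel_def)
    have IK: "game_trans G H K'" if "K' \<in> opts K" for K'
      using less that by (simp add: option_rel_def)
    show ?case
      unfolding game_trans_def
      using game_lf_le_trans_step[OF IG IH IK] game_le_lf_trans_step[OF IG IH IK]
        game_le_le_trans_step[OF IG IH IK]
      by blast
  qed
qed

theorem lemma4p6:
  fixes G H K :: "('a::order, 'i) game"
  assumes "wf_game G" and "wf_game H" and "wf_game K"
  shows "(game_lf G H \<and> game_le H K \<longrightarrow> game_lf G K)
       \<and> (game_le G H \<and> game_lf H K \<longrightarrow> game_lf G K)
       \<and> (game_le G H \<and> game_le H K \<longrightarrow> game_le G K)"
  using game_trans[of G H K] unfolding game_trans_def .

end
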